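(* Let $\Gamma$, $c$, $r$, $M$ and $\mathcal{A}$ be as in the preceding setting (the generic canonical $\Gamma$ with diagonal part and lower Jordan blocks, and the solution $(r,M)=(r,FGH)$ of $(pI-\Gamma)\tilde r=(pI+\Gamma)r$, $(qI-\Gamma)\hat r=(qI+\Gamma)r$, $M\Gamma+\Gamma M=rc$), and let $(r',M')=(\mathcal{A}r,\mathcal{A}M)$. Fix $(n,m)$ with $I+M'(n,m)$ invertible. Then for all $i,j\in\mathbb{Z}$ the quantity $S^{(i,j)}=c\,\Gamma^j(I+M')^{-1}\Gamma^i r'$ satisfies $S^{(i,j)}=S^{(j,i)}$.
   Context: Setting: $p,q\in\mathbb{C}$; $\Gamma=\mathrm{Diag}(\mathrm{Diag}(k_1,\dots,k_{N_1}),\Gamma^{[N_2]}_J(\kappa_2),\dots,\Gamma^{[N_s]}_J(\kappa_s))$, where $\Gamma^{[N]}_J(\kappa)$ is the $N\times N$ matrix with $\kappa$ on the diagonal and $1$ on the subdiagonal; all eigenvalues $\lambda,\mu$ of $\Gamma$ satisfy $\lambda+\mu\ne0$ (so $\Gamma$ is invertible) and $p,q\notin\{\pm\lambda\}$. $c=(c^{(1)},\dots,c^{(s)})$ constant, blocks of lengths $N_1,\dots,N_s$. Plane wave factor $\rho(k)=\big(\tfrac{p+k}{p-k}\big)^n\big(\tfrac{q+k}{q-k}\big)^m\rho^0$, $\rho_i=\rho(k_i)$. $r=(\rho_1,\dots,\rho_{N_1},r_J(\kappa_2),\dots,r_J(\kappa_s))^T$ with $r_J(\kappa)=(\rho,\partial_k\rho/1!,\dots,\partial_k^{N_j-1}\rho/(N_j-1)!)|_{k=\kappa}$.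 $M=FGH$ with $F=\mathrm{Diag}(\rho_1,\dots,\rho_{N_1},F_J(\kappa_2),\dots,F_J(\kappa_s))$, $F_J(\kappa)$ lower triangular with $(i,j)$ entry $\partial_k^{i-j}\rho|_{k=\kappa}/(i-j)!$; $H=\mathrm{Diag}(c_1,\dots,c_{N_1},H_J(c^{(2)}),\dots,H_J(c^{(s)}))$, $H_J(d_1,\dots,d_N)$ with $(i,j)$ entry $d_{i+j-1}$ if $i+j-1\le N$ else $0$; $G$ symmetric block matrix with $G_{1,1}=(\frac1{k_i+k_j})$, $G_{1,j}=G_{j,1}^T$ having $(l,t)$ entry $-\big(\frac{-1}{k_l+\kappa_j}\big)^t$, and $G_{i,j}=G_{j,i}^T$ ($1<i\le j$) having $(l,t)$ entry $\binom{l+t-2}{l-1}\frac{(-1)^{l+t}}{(\kappa_i+\kappa_j)^{l+t-1}}$. $\mathcal{A}=\mathrm{Diag}(I_{N_1},\mathcal{A}_2,\dots,\mathcal{A}_s)$ with each $\mathcal{A}_j$ a constant lower triangular Toeplitz matrix (possibly all identities). $\tilde{}$, $\hat{}$ denote shifts in $n$, $m$. *)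

theory Defs
  imports "HOL-Analysis.Analysis" "Jordan_Normal_Form.Matrix"
begin

text \<open>Block data.  ks = (k_1,...,k_N1) is the diagonal part; js = [(kappa_2,N_2),...,(kappa_s,N_s)]
  lists the lower Jordan blocks.  Global indices are 0-based.  An index is either
  D a (a-th entry of the diagonal part) or J b l (local 0-based position l inside the
  b-th Jordan block, b 0-based, i.e. block number b+2 of the paper).\<close>

datatype idx = D nat | J nat nat

fun jpos :: "nat list \<Rightarrow> nat \<Rightarrow> nat \<times> nat" where
  "jpos [] i = (0, i)"
| "jpos (n # ns) i = (if i < n then (0, i) else (let (b, l) = jpos ns (i - n) in (Suc b, l)))"

definition Ntot :: "complex list \<Rightarrow> (complex \<times> nat) list \<Rightarrow> nat" where
  "Ntot ks js = length ks + sum_list (map snd js)"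

definition ix :: "complex list \<Rightarrow> (complex \<times> nat) list \<Rightarrow> nat \<Rightarrow> idx" where
  "ix ks js g = (if g < length ks then D g
                 else (case jpos (map snd js) (g - length ks) of (b, l) \<Rightarrow> J b l))"

definition rho :: "complex \<Rightarrow> complex \<Rightarrow> int \<Rightarrow> int \<Rightarrow> complex \<Rightarrow> complex \<Rightarrow> complex" where
  "rho p q n m rho0 k = ((p + k) / (p - k)) powi n * ((q + k) / (q - k)) powi m * rho0"

definition drho :: "complex \<Rightarrow> complex \<Rightarrow> int \<Rightarrow> int \<Rightarrow> complex \<Rightarrow> nat \<Rightarrow> complex \<Rightarrow> complex" where
  "drho p q n m rho0 l \<kappa> = (deriv ^^ l) (rho p q n m rho0) \<kappa> / of_nat (fact l)"

definition Gam :: "complex list \<Rightarrow> (complex \<times> nat) list \<Rightarrow> complex mat" where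
  "Gam ks js = mat (Ntot ks js) (Ntot ks js) (\<lambda>(g, h).
     case (ix ks js g, ix ks js h) of
       (D a, D a') \<Rightarrow> (if a = a' then ks ! a else 0)
     | (J b l, J b' t) \<Rightarrow> (if b = b' then (if l = t then fst (js ! b) else if l = Suc t then 1 else 0) else 0)
     | _ \<Rightarrow> 0)"

text \<open>the constant row vector c = (c^(1),...,c^(s)); cD = c^(1), cJ ! b = c^(b+2)\<close>
definition cvec :: "complex list \<Rightarrow> (complex \<times> nat) list \<Rightarrow> complex list \<Rightarrow> complex list list \<Rightarrow> complex vec" where
  "cvec ks js cD cJ = vec (Ntot ks js) (\<lambda>g.
     case ix ks js g of D a \<Rightarrow> cD ! a | J b l \<Rightarrow> cJ ! b ! l)"

definition rvec :: "complex list \<Rightarrow> (complex \<times> nat) list \<Rightarrow> complex \<Rightarrow> complex \<Rightarrow> int \<Rightarrow> int \<Rightarrow> complex \<Rightarrow> complex vec" where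
  "rvec ks js p q n m rho0 = vec (Ntot ks js) (\<lambda>g.
     case ix ks js g of D a \<Rightarrow> rho p q n m rho0 (ks ! a)
                      | J b l \<Rightarrow> drho p q n m rho0 l (fst (js ! b)))"

definition Fmat :: "complex list \<Rightarrow> (complex \<times> nat) list \<Rightarrow> complex \<Rightarrow> complex \<Rightarrow> int \<Rightarrow> int \<Rightarrow> complex \<Rightarrow> complex mat" where
  "Fmat ks js p q n m rho0 = mat (Ntot ks js) (Ntot ks js) (\<lambda>(g, h).
     case (ix ks js g, ix ks js h) of
       (D a, D a') \<Rightarrow> (if a = a' then rho p q n m rho0 (ks ! a) else 0)
     | (J b l, J b' t) \<Rightarrow> (if b = b' \<and> t \<le> l then drho p q n m rho0 (l - t) (fst (js ! b)) else 0)
     | _ \<Rightarrow> 0)"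

text \<open>G; local positions are 0-based, so paper's (l,t) is (l+1,t+1) here\<close>
definition Gmat :: "complex list \<Rightarrow> (complex \<times> nat) list \<Rightarrow> complex mat" where
  "Gmat ks js = mat (Ntot ks js) (Ntot ks js) (\<lambda>(g, h).
     case (ix ks js g, ix ks js h) of
       (D a, D a') \<Rightarrow> 1 / (ks ! a + ks ! a')
     | (D a, J b t) \<Rightarrow> - (((-1) / (ks ! a + fst (js ! b))) ^ Suc t)
     | (J b l, D a) \<Rightarrow> - (((-1) / (ks ! a + fst (js ! b))) ^ Suc l)
     | (J b l, J b' t) \<Rightarrow> (of_nat ((l + t) choose l) * (-1) ^ (l + t)
                            / (fst (js ! b) + fst (js ! b')) ^ (l + t + 1)))"

definition Hmat :: "complex list \<Rightarrow> (complex \<times> nat) list \<Rightarrow> complex list \<Rightarrow> complex list list \<Rightarrow> complex mat" where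
  "Hmat ks js cD cJ = mat (Ntot ks js) (Ntot ks js) (\<lambda>(g, h).
     case (ix ks js g, ix ks js h) of
       (D a, D a') \<Rightarrow> (if a = a' then cD ! a else 0)
     | (J b l, J b' t) \<Rightarrow> (if b = b' \<and> l + t + 1 \<le> snd (js ! b) then cJ ! b ! (l + t) else 0)
     | _ \<Rightarrow> 0)"

text \<open>calA = Diag(I, A_2,...,A_s), A_j lower triangular Toeplitz with first column aJ ! b\<close>
definition Amat :: "complex list \<Rightarrow> (complex \<times> nat) list \<Rightarrow> complex list list \<Rightarrow> complex mat" where
  "Amat ks js aJ = mat (Ntot ks js) (Ntot ks js) (\<lambda>(g, h).
     case (ix ks js g, ix ks js h) of
       (D a, D a') \<Rightarrow> (if a = a' then 1 else 0)
     | (J b l, J b' t) \<Rightarrow> (if b = b' \<and> t \<le> l then aJ ! b ! (l - t) else 0)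
     | _ \<Rightarrow> 0)"

definition Mmat :: "complex list \<Rightarrow> (complex \<times> nat) list \<Rightarrow> complex \<Rightarrow> complex \<Rightarrow> int \<Rightarrow> int \<Rightarrow> complex
    \<Rightarrow> complex list \<Rightarrow> complex list list \<Rightarrow> complex mat" where
  "Mmat ks js p q n m rho0 cD cJ = Fmat ks js p q n m rho0 * Gmat ks js * Hmat ks js cD cJ"

definition minv :: "complex mat \<Rightarrow> complex mat" where
  "minv A = (SOME B. inverts_mat A B \<and> inverts_mat B A)"

definition mpowi :: "complex mat \<Rightarrow> int \<Rightarrow> complex mat" where
  "mpowi A j = (if 0 \<le> j then A ^\<^sub>m nat j else (minv A) ^\<^sub>m nat (- j))"

end

theory Submission
  imports Defs
begin

(* Let e be the vector with entry 1 at every diagonal position and at the first position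
   of every Jordan block, and 0 elsewhere.  Then r = F e and c = H e, and F, Gamma, A and all
   integer powers of Gamma lie in the commutative algebra of block lower-triangular Toeplitz
   matrices (same block pattern as Gamma), while H is block Hankel.  Hence, with F' = A F,
   P = Gamma^j, Q = Gamma^i and X = (I + F' G H)^-1,
        c . P X Q r' = e . (H P) X Q F' e = (P e) . (H X F') (Q e),
   because H P = P^T H (a Hankel times a Toeplitz block is symmetric) and Q F' = F' Q.  Finally
   Y = H X F' is symmetric: G and H F' are symmetric, and Y + (H F') G Y = H F' forces Y = Y^T. *)


section \<open>Enumeration of the index set\<close>

lemma jpos_props:
  "i < sum_list ns \<Longrightarrow> jpos ns i = (b, l) \<Longrightarrow>
     b < length ns \<and> l < ns ! b \<and> i = sum_list (take b ns) + l"
proof (induction ns arbitrary: i b l)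
  case Nil then show ?case by simp
next
  case (Cons n ns)
  show ?case
  proof (cases "i < n")
    case True with Cons.prems show ?thesis by auto
  next
    case False
    obtain b' l' where e: "jpos ns (i - n) = (b', l')" by (cases "jpos ns (i - n)")
    with False Cons.prems have b: "b = Suc b'" "l = l'" by auto
    from Cons.prems False have "i - n < sum_list ns" by simp
    from Cons.IH[OF this e] False show ?thesis using b by auto
  qed
qed

lemma jpos_eq: "b < length ns \<Longrightarrow> l < ns ! b \<Longrightarrow> jpos ns (sum_list (take b ns) + l) = (b, l)"
proof (induction ns arbitrary: b)
  case (Cons n ns)
  then show ?case by (cases b) auto
qed simp

definition Idx :: "complex list \<Rightarrow> (complex \<times> nat) list \<Rightarrow> idx set" where
  "Idx ks js = D ` {..<length ks} \<union> (\<lambda>(b, l). J b l) ` (SIGMA b:{..<length js}. {..<snd (js ! b)})"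

lemma ix_cases:
  assumes "g < Ntot ks js"
  shows "(ix ks js g = D g \<and> g < length ks) \<or>
    (\<exists>b l. ix ks js g = J b l \<and> b < length js \<and> l < snd (js ! b) \<and>
        g = length ks + sum_list (take b (map snd js)) + l)"
proof (cases "g < length ks")
  case True then show ?thesis by (simp add: ix_def)
next
  case False
  obtain b l where e: "jpos (map snd js) (g - length ks) = (b, l)"
    by (cases "jpos (map snd js) (g - length ks)")
  have "g - length ks < sum_list (map snd js)" using assms False by (simp add: Ntot_def)
  from jpos_props[OF this e] False e show ?thesis by (auto simp: ix_def)
qed

lemma ix_inj: "inj_on (ix ks js) {..<Ntot ks js}"
proof (rule inj_onI)
  fix g h assume "g \<in> {..<Ntot ks js}" "h \<in> {..<Ntot ks js}" "ix ks js g = ix ks js h"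
  with ix_cases[of g ks js] ix_cases[of h ks js] show "g = h" by auto
qed

lemma ix_J_surj:
  assumes "b < length js" "l < snd (js ! b)"
  shows "\<exists>g < Ntot ks js. ix ks js g = J b l"
proof -
  define g where "g = length ks + sum_list (take b (map snd js)) + l"
  have "sum_list (map snd js) = sum_list (take b (map snd js)) + sum_list (drop b (map snd js))"
    by (metis append_take_drop_id sum_list_append)
  moreover have "drop b (map snd js) = snd (js ! b) # drop (Suc b) (map snd js)"
    using Cons_nth_drop_Suc[of b "map snd js"] assms by simp
  ultimately have "g < Ntot ks js" using assms by (simp add: g_def Ntot_def)
  moreover have "ix ks js g = J b l"
    using jpos_eq[of b "map snd js" l] assms by (simp add: ix_def g_def)
  ultimately show ?thesis by blast
qed

lemma ix_image: "ix ks js ` {..<Ntot ks js} = Idx ks js"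
proof
  show "ix ks js ` {..<Ntot ks js} \<subseteq> Idx ks js"
    using ix_cases by (fastforce simp: Idx_def)
next
  show "Idx ks js \<subseteq> ix ks js ` {..<Ntot ks js}"
  proof
    fix x assume x: "x \<in> Idx ks js"
    show "x \<in> ix ks js ` {..<Ntot ks js}"
    proof (cases x)
      case (D a)
      with x show ?thesis by (auto simp: Idx_def ix_def Ntot_def intro!: image_eqI[where x = a])
    next
      case (J b l)
      with x have "b < length js" "l < snd (js ! b)" by (auto simp: Idx_def)
      with ix_J_surj obtain g where "g < Ntot ks js" "ix ks js g = J b l" by blast
      with J show ?thesis by force
    qed
  qed
qed

lemma ix_Idx: "g < Ntot ks js \<Longrightarrow> ix ks js g \<in> Idx ks js"
  using ix_image by blast

lemma finite_Idx [simp]: "finite (Idx ks js)"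
  by (simp add: Idx_def)

lemma sum_ix: "(\<Sum>g<Ntot ks js. f (ix ks js g)) = sum f (Idx ks js)"
  using sum.reindex[OF ix_inj, of f] ix_image by simp

lemma sum_Idx_single:
  assumes "x \<in> Idx ks js" "\<And>z. z \<in> Idx ks js \<Longrightarrow> z \<noteq> x \<Longrightarrow> f z = 0"
  shows "sum f (Idx ks js) = f x"
  using sum.mono_neutral_right[of "Idx ks js" "{x}" f] assms by auto

lemma sum_Idx_block:
  assumes "b < length js" "\<And>z. z \<in> Idx ks js \<Longrightarrow> z \<notin> J b ` {..<snd (js ! b)} \<Longrightarrow> f z = 0"
  shows "sum f (Idx ks js) = (\<Sum>l<snd (js ! b). f (J b l))"
proof -
  have "J b ` {..<snd (js ! b)} \<subseteq> Idx ks js" using assms(1) by (force simp: Idx_def)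
  then have "sum f (Idx ks js) = sum f (J b ` {..<snd (js ! b)})"
    using assms(2) by (intro sum.mono_neutral_right) auto
  also have "\<dots> = (\<Sum>l<snd (js ! b). f (J b l))"
    by (subst sum.reindex) (auto simp: inj_on_def)
  finally show ?thesis .
qed

definition block_diag :: "(idx \<Rightarrow> idx \<Rightarrow> complex) \<Rightarrow> bool" where
  "block_diag \<phi> \<longleftrightarrow> (\<forall>a a'. a \<noteq> a' \<longrightarrow> \<phi> (D a) (D a') = 0) \<and>
     (\<forall>a b l. \<phi> (D a) (J b l) = 0 \<and> \<phi> (J b l) (D a) = 0) \<and>
     (\<forall>b b' l t. b \<noteq> b' \<longrightarrow> \<phi> (J b l) (J b' t) = 0)"

lemma block_diag_sum:
  assumes "block_diag \<phi>" "x \<in> Idx ks js"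
  shows "(\<Sum>z\<in>Idx ks js. \<phi> x z * \<psi> z) =
    (case x of D a \<Rightarrow> \<phi> x x * \<psi> x | J b l \<Rightarrow> (\<Sum>u<snd (js ! b). \<phi> x (J b u) * \<psi> (J b u)))"
proof (cases x)
  case (D a)
  have "\<phi> x z = 0" if "z \<noteq> x" for z
    using assms(1) that D by (cases z) (auto simp: block_diag_def)
  with assms(2) D show ?thesis by (simp add: sum_Idx_single)
next
  case (J b l)
  have "\<phi> x z = 0" if "z \<notin> J b ` {..<snd (js ! b)}" "z \<in> Idx ks js" for z
  proof (cases z)
    case (J b' t)
    with that have "b' \<noteq> b" by (auto simp: Idx_def)
    with assms(1) J \<open>x = J b l\<close> show ?thesis by (simp add: block_diag_def)
  qed (use assms(1) J in \<open>simp add: block_diag_def\<close>)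
  moreover have "b < length js" using assms(2) J by (auto simp: Idx_def)
  ultimately show ?thesis using J by (simp add: sum_Idx_block)
qed

definition imat :: "complex list \<Rightarrow> (complex \<times> nat) list \<Rightarrow> (idx \<Rightarrow> idx \<Rightarrow> complex) \<Rightarrow> complex mat" where
  "imat ks js \<phi> = mat (Ntot ks js) (Ntot ks js) (\<lambda>(g, h). \<phi> (ix ks js g) (ix ks js h))"

definition ivec :: "complex list \<Rightarrow> (complex \<times> nat) list \<Rightarrow> (idx \<Rightarrow> complex) \<Rightarrow> complex vec" where
  "ivec ks js \<psi> = vec (Ntot ks js) (\<lambda>g. \<psi> (ix ks js g))"

lemma imat_carrier [simp]: "imat ks js \<phi> \<in> carrier_mat (Ntot ks js) (Ntot ks js)"
  by (simp add: imat_def)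

lemma ivec_carrier [simp]: "ivec ks js \<psi> \<in> carrier_vec (Ntot ks js)"
  by (simp add: ivec_def)

lemma imat_cong:
  assumes "\<And>x y. x \<in> Idx ks js \<Longrightarrow> y \<in> Idx ks js \<Longrightarrow> \<phi> x y = \<omega> x y"
  shows "imat ks js \<phi> = imat ks js \<omega>"
  using assms by (intro eq_matI) (auto simp: imat_def ix_Idx)

lemma imat_mult:
  assumes "\<And>x y. x \<in> Idx ks js \<Longrightarrow> y \<in> Idx ks js \<Longrightarrow> (\<Sum>z\<in>Idx ks js. \<phi> x z * \<psi> z y) = \<omega> x y"
  shows "imat ks js \<phi> * imat ks js \<psi> = imat ks js \<omega>"
proof (rule eq_matI)
  fix g h assume "g < dim_row (imat ks js \<omega>)" "h < dim_col (imat ks js \<omega>)"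
  then have g: "g < Ntot ks js" and h: "h < Ntot ks js" by (auto simp: imat_def)
  have "(imat ks js \<phi> * imat ks js \<psi>) $$ (g, h)
      = (\<Sum>k<Ntot ks js. \<phi> (ix ks js g) (ix ks js k) * \<psi> (ix ks js k) (ix ks js h))"
    using g h by (simp add: imat_def scalar_prod_def lessThan_atLeast0)
  also have "\<dots> = \<omega> (ix ks js g) (ix ks js h)"
    using sum_ix[of "\<lambda>z. \<phi> (ix ks js g) z * \<psi> z (ix ks js h)"] assms ix_Idx g h by simp
  finally show "(imat ks js \<phi> * imat ks js \<psi>) $$ (g, h) = imat ks js \<omega> $$ (g, h)"
    using g h by (simp add: imat_def)
qed (auto simp: imat_def)

lemma imat_mult_ivec:
  assumes "\<And>x. x \<in> Idx ks js \<Longrightarrow> (\<Sum>z\<in>Idx ks js. \<phi> x z * \<psi> z) = \<omega> x"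
  shows "imat ks js \<phi> *\<^sub>v ivec ks js \<psi> = ivec ks js \<omega>"
proof (rule eq_vecI)
  fix g assume "g < dim_vec (ivec ks js \<omega>)"
  then have g: "g < Ntot ks js" by (simp add: ivec_def)
  have "(imat ks js \<phi> *\<^sub>v ivec ks js \<psi>) $ g
      = (\<Sum>k<Ntot ks js. \<phi> (ix ks js g) (ix ks js k) * \<psi> (ix ks js k))"
    using g by (simp add: imat_def ivec_def scalar_prod_def lessThan_atLeast0)
  also have "\<dots> = \<omega> (ix ks js g)"
    using sum_ix[of "\<lambda>z. \<phi> (ix ks js g) z * \<psi> z"] assms ix_Idx g by simp
  finally show "(imat ks js \<phi> *\<^sub>v ivec ks js \<psi>) $ g = ivec ks js \<omega> $ g"
    using g by (simp add: ivec_def)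
qed (simp add: imat_def ivec_def)

lemma imat_symmetric:
  assumes "\<And>x y. \<phi> x y = \<phi> y x"
  shows "transpose_mat (imat ks js \<phi>) = imat ks js \<phi>"
  using assms by (intro eq_matI) (auto simp: imat_def)

lemma imat_one: "imat ks js (\<lambda>x y. if x = y then 1 else 0) = 1\<^sub>m (Ntot ks js)"
proof (rule eq_matI)
  fix g h
  assume "g < dim_row (1\<^sub>m (Ntot ks js) :: complex mat)" "h < dim_col (1\<^sub>m (Ntot ks js) :: complex mat)"
  then have "g < Ntot ks js" "h < Ntot ks js" by auto
  moreover from this have "ix ks js g = ix ks js h \<longleftrightarrow> g = h"
    using ix_inj[of ks js] by (auto simp: inj_on_def)
  ultimately show "imat ks js (\<lambda>x y. if x = y then 1 else 0) $$ (g, h) = 1\<^sub>m (Ntot ks js) $$ (g, h)"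
    by (simp add: imat_def)
qed (auto simp: imat_def)


section \<open>The algebra of block lower-triangular Toeplitz matrices\<close>

definition tm :: "(nat \<Rightarrow> complex) \<Rightarrow> (nat \<Rightarrow> nat \<Rightarrow> complex) \<Rightarrow> idx \<Rightarrow> idx \<Rightarrow> complex" where
  "tm d e x y = (case (x, y) of (D a, D a') \<Rightarrow> if a = a' then d a else 0
     | (J b l, J b' t) \<Rightarrow> if b = b' \<and> t \<le> l then e b (l - t) else 0 | _ \<Rightarrow> 0)"

definition Tmat :: "complex list \<Rightarrow> (complex \<times> nat) list \<Rightarrow> (nat \<Rightarrow> complex) \<Rightarrow> (nat \<Rightarrow> nat \<Rightarrow> complex)
    \<Rightarrow> complex mat" where
  "Tmat ks js d e = imat ks js (tm d e)"

definition toeplitz :: "complex list \<Rightarrow> (complex \<times> nat) list \<Rightarrow> complex mat set" where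
  "toeplitz ks js = {Tmat ks js d e | d e. True}"

lemma block_diag_tm: "block_diag (tm d e)"
  by (simp add: block_diag_def tm_def)

text \<open>Blockwise convolution of first columns: the first column of a product of Toeplitz blocks.\<close>
definition conv :: "(nat \<Rightarrow> nat \<Rightarrow> complex) \<Rightarrow> (nat \<Rightarrow> nat \<Rightarrow> complex) \<Rightarrow> nat \<Rightarrow> nat \<Rightarrow> complex" where
  "conv e e' b k = (\<Sum>w\<le>k. e b (k - w) * e' b w)"

lemma conv_comm: "conv e e' = conv e' e"
proof (intro ext)
  fix b k
  show "conv e e' b k = conv e' e b k" unfolding conv_def
    by (rule sum.reindex_bij_witness[where i="\<lambda>w. k - w" and j="\<lambda>w. k - w"]) (auto simp: mult.commute)
qed

lemma toeplitz_block_mult: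
  fixes f g :: "nat \<Rightarrow> complex"
  assumes "l0 < n"
  shows "(\<Sum>u<n. (if u \<le> l0 then f (l0 - u) else 0) * (if t \<le> u then g (u - t) else 0))
    = (if t \<le> l0 then (\<Sum>w\<le>l0 - t. f (l0 - t - w) * g w) else 0)"
proof (cases "t \<le> l0")
  case True
  have "(\<Sum>u<n. (if u \<le> l0 then f (l0 - u) else 0) * (if t \<le> u then g (u - t) else 0))
      = (\<Sum>u<n. if u \<in> {t..l0} then f (l0 - u) * g (u - t) else 0)"
    by (rule sum.cong) auto
  also have "\<dots> = sum (\<lambda>u. f (l0 - u) * g (u - t)) ({..<n} \<inter> {t..l0})"
    by (simp add: sum.inter_restrict)
  also have "{..<n} \<inter> {t..l0} = {0 + t..(l0 - t) + t}" using assms True by auto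
  also have "sum (\<lambda>u. f (l0 - u) * g (u - t)) {0 + t..(l0 - t) + t}
      = (\<Sum>w\<in>{0..l0 - t}. f (l0 - (w + t)) * g (w + t - t))"
    by (rule sum.shift_bounds_cl_nat_ivl)
  also have "\<dots> = (\<Sum>w\<le>l0 - t. f (l0 - t - w) * g w)"
    by (simp add: atLeast0AtMost diff_diff_add add.commute)
  finally show ?thesis using True by simp
qed (auto intro!: sum.neutral)

lemma tm_mult:
  assumes x: "x \<in> Idx ks js"
  shows "(\<Sum>z\<in>Idx ks js. tm d e x z * tm d' e' z y) = tm (\<lambda>a. d a * d' a) (conv e e') x y"
proof (cases x)
  case (D a)
  then show ?thesis unfolding block_diag_sum[OF block_diag_tm x] by (simp add: tm_def split: idx.split)
next
  case (J b l)
  with x have l: "l < snd (js ! b)" by (auto simp: Idx_def)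
  show ?thesis
  proof (cases y)
    case (D a)
    with J show ?thesis unfolding block_diag_sum[OF block_diag_tm x] by (simp add: tm_def)
  next
    case (J b' t)
    have "(\<Sum>z\<in>Idx ks js. tm d e x z * tm d' e' z y) = (\<Sum>u<snd (js ! b).
        (if u \<le> l then e b (l - u) else 0) * (if b = b' \<and> t \<le> u then e' b (u - t) else 0))"
      unfolding block_diag_sum[OF block_diag_tm x] using \<open>x = J b l\<close> J by (simp add: tm_def)
    also have "\<dots> = tm (\<lambda>a. d a * d' a) (conv e e') x y"
      using toeplitz_block_mult[OF l, of "e b" t "e' b"] \<open>x = J b l\<close> J
      by (cases "b = b'") (simp_all add: tm_def conv_def)
    finally show ?thesis .
  qed
qed

lemma Tmat_mult: "Tmat ks js d e * Tmat ks js d' e' = Tmat ks js (\<lambda>a. d a * d' a) (conv e e')"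
  unfolding Tmat_def by (rule imat_mult) (rule tm_mult)

lemma Tmat_one: "Tmat ks js (\<lambda>_. 1) (\<lambda>b k. if k = 0 then 1 else 0) = 1\<^sub>m (Ntot ks js)"
proof -
  have "tm (\<lambda>_. 1) (\<lambda>b k. if k = 0 then 1 else 0) = (\<lambda>x y. if x = y then 1 else 0)"
    by (intro ext) (auto simp: tm_def split: idx.split)
  then show ?thesis by (simp add: Tmat_def imat_one)
qed

lemma Tmat_cong:
  assumes "\<And>a. a < length ks \<Longrightarrow> d a = d' a" "\<And>b k. b < length js \<Longrightarrow> e b k = e' b k"
  shows "Tmat ks js d e = Tmat ks js d' e'"
  unfolding Tmat_def by (rule imat_cong) (auto simp: Idx_def tm_def assms)

lemma toeplitz_carrier: "T \<in> toeplitz ks js \<Longrightarrow> T \<in> carrier_mat (Ntot ks js) (Ntot ks js)"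
  by (auto simp: toeplitz_def Tmat_def)

lemma toeplitz_mult: "S \<in> toeplitz ks js \<Longrightarrow> T \<in> toeplitz ks js \<Longrightarrow> S * T \<in> toeplitz ks js"
  by (auto simp: toeplitz_def Tmat_mult) blast

lemma toeplitz_comm: "S \<in> toeplitz ks js \<Longrightarrow> T \<in> toeplitz ks js \<Longrightarrow> S * T = T * S"
  by (auto simp: toeplitz_def Tmat_mult conv_comm mult.commute)

lemma toeplitz_pow: "T \<in> toeplitz ks js \<Longrightarrow> T ^\<^sub>m k \<in> toeplitz ks js"
proof (induction k)
  case 0
  have "1\<^sub>m (Ntot ks js) \<in> toeplitz ks js" unfolding toeplitz_def Tmat_one[symmetric] by blast
  with toeplitz_carrier[OF 0] show ?case by simp
next
  case (Suc k) then show ?case by (simp add: toeplitz_mult)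
qed

definition eGam :: "(complex \<times> nat) list \<Rightarrow> nat \<Rightarrow> nat \<Rightarrow> complex" where
  "eGam js b k = (if k = 0 then fst (js ! b) else if k = 1 then 1 else 0)"

lemma Gam_Tmat: "Gam ks js = Tmat ks js (\<lambda>a. ks ! a) (eGam js)"
  by (rule eq_matI) (auto simp: Tmat_def imat_def Gam_def tm_def eGam_def split: idx.split)

lemma Amat_Tmat: "Amat ks js aJ = Tmat ks js (\<lambda>_. 1) (\<lambda>b k. aJ ! b ! k)"
  by (rule eq_matI) (auto simp: Tmat_def imat_def Amat_def tm_def split: idx.split)

lemma Fmat_Tmat:
  "Fmat ks js p q n m rho0 =
     Tmat ks js (\<lambda>a. rho p q n m rho0 (ks ! a)) (\<lambda>b k. drho p q n m rho0 k (fst (js ! b)))"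
  by (rule eq_matI) (auto simp: Tmat_def imat_def Fmat_def tm_def split: idx.split)

text \<open>The inverse of the Jordan block with eigenvalue kappa is the lower triangular Toeplitz
  matrix with first column (-1)^k / kappa^(k+1).\<close>
definition eGam_inv :: "(complex \<times> nat) list \<Rightarrow> nat \<Rightarrow> nat \<Rightarrow> complex" where
  "eGam_inv js b k = (-1) ^ k / fst (js ! b) ^ (k + 1)"

lemma conv_eGam_eGam_inv:
  assumes "fst (js ! b) \<noteq> 0"
  shows "conv (eGam js) (eGam_inv js) b k = (if k = 0 then 1 else 0)"
proof (cases k)
  case 0 then show ?thesis using assms by (simp add: conv_def eGam_def eGam_inv_def)
next
  case (Suc k')
  have "(\<Sum>w\<le>k'. eGam js b (Suc k' - w) * eGam_inv js b w) = (\<Sum>w\<le>k'. if w = k' then eGam_inv js b w else 0)"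
    by (rule sum.cong) (auto simp: eGam_def)
  then have "conv (eGam js) (eGam_inv js) b k = eGam_inv js b k' + fst (js ! b) * eGam_inv js b (Suc k')"
    by (simp add: conv_def Suc eGam_def)
  then show ?thesis using assms Suc by (simp add: eGam_inv_def field_simps)
qed

lemma minv_unique:
  fixes A V :: "complex mat"
  assumes A: "A \<in> carrier_mat N N" and V: "V \<in> carrier_mat N N"
    and AV: "A * V = 1\<^sub>m N" and VA: "V * A = 1\<^sub>m N"
  shows "minv A = V"
proof -
  have "\<exists>B. inverts_mat A B \<and> inverts_mat B A"
    using A V AV VA by (auto simp: inverts_mat_def)
  then have "inverts_mat A (minv A) \<and> inverts_mat (minv A) A"
    unfolding minv_def by (rule someI_ex)
  then have AB: "A * minv A = 1\<^sub>m N" and BA: "minv A * A = 1\<^sub>m (dim_row (minv A))"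
    using A by (auto simp: inverts_mat_def)
  have B: "minv A \<in> carrier_mat N N"
    using arg_cong[OF AB, of dim_col] arg_cong[OF BA, of dim_col] A by auto
  have "minv A = minv A * (A * V)" using AV B by simp
  also have "\<dots> = (minv A * A) * V" using A B V by simp
  also have "\<dots> = V" using BA B V by simp
  finally show ?thesis .
qed

lemma mpowi_Gam_toeplitz:
  assumes "\<forall>x\<in>set ks \<union> fst ` set js. x \<noteq> 0"
  shows "mpowi (Gam ks js) k \<in> toeplitz ks js"
proof -
  define V where "V = Tmat ks js (\<lambda>a. 1 / ks ! a) (eGam_inv js)"
  have GV: "Gam ks js * V = 1\<^sub>m (Ntot ks js)"
    unfolding V_def Gam_Tmat Tmat_mult Tmat_one[symmetric]
    using assms by (intro Tmat_cong) (simp_all add: conv_eGam_eGam_inv)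
  have T: "Gam ks js \<in> toeplitz ks js" "V \<in> toeplitz ks js"
    by (auto simp: toeplitz_def V_def Gam_Tmat)
  then have "minv (Gam ks js) = V"
    using GV toeplitz_comm[OF T] toeplitz_carrier by (intro minv_unique) auto
  with T show ?thesis by (simp add: mpowi_def toeplitz_pow)
qed


section \<open>Symmetry of G, of H, and of H times a block Toeplitz matrix\<close>

text \<open>G is symmetric entrywise, by the symmetry of binomial coefficients.\<close>
lemma Gmat_symmetric: "transpose_mat (Gmat ks js) = Gmat ks js"
proof -
  have "((l + t) choose l) = ((t + l) choose t)" for l t :: nat
    by (metis add.commute binomial_symmetric le_add1 add_diff_cancel_left')
  then show ?thesis by (intro eq_matI) (auto simp: Gmat_def add.commute split: idx.split)
qed

definition hm :: "(complex \<times> nat) list \<Rightarrow> complex list \<Rightarrow> complex list list \<Rightarrow> idx \<Rightarrow> idx \<Rightarrow> complex" where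
  "hm js cD cJ x y = (case (x, y) of (D a, D a') \<Rightarrow> if a = a' then cD ! a else 0
     | (J b l, J b' t) \<Rightarrow> if b = b' \<and> l + t + 1 \<le> snd (js ! b) then cJ ! b ! (l + t) else 0
     | _ \<Rightarrow> 0)"

lemma Hmat_imat: "Hmat ks js cD cJ = imat ks js (hm js cD cJ)"
  by (rule eq_matI) (auto simp: imat_def Hmat_def hm_def split: idx.split)

lemma block_diag_hm: "block_diag (hm js cD cJ)"
  by (simp add: block_diag_def hm_def)

lemma Hmat_symmetric: "transpose_mat (Hmat ks js cD cJ) = Hmat ks js cD cJ"
  unfolding Hmat_imat by (rule imat_symmetric) (auto simp: hm_def add.commute split: idx.split)

text \<open>Entry (l, t) of a Hankel block times a lower triangular Toeplitz block depends on l + t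
  only, so the product is again a Hankel block.\<close>
lemma hankel_toeplitz_block:
  fixes c e :: "nat \<Rightarrow> complex"
  shows "(\<Sum>u<N. (if l + u + 1 \<le> N then c (l + u) else 0) * (if t \<le> u then e (u - t) else 0))
     = (\<Sum>v<N. if l + t + v + 1 \<le> N then c (l + t + v) * e v else 0)"
proof -
  have "(\<Sum>u<N. (if l + u + 1 \<le> N then c (l + u) else 0) * (if t \<le> u then e (u - t) else 0))
     = (\<Sum>u\<in>{t..<N}. if l + u + 1 \<le> N then c (l + u) * e (u - t) else 0)"
    by (rule sum.mono_neutral_cong_right) auto
  also have "\<dots> = (\<Sum>v\<in>{0..<N - t}. if l + (v + t) + 1 \<le> N then c (l + (v + t)) * e (v + t - t) else 0)"
    using sum.shift_bounds_nat_ivl[of _ 0 t "N - t"] by (cases "t \<le> N") auto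
  also have "\<dots> = (\<Sum>v<N - t. if l + t + v + 1 \<le> N then c (l + t + v) * e v else 0)"
    by (simp add: lessThan_atLeast0 add_ac cong: if_cong)
  also have "\<dots> = (\<Sum>v<N. if l + t + v + 1 \<le> N then c (l + t + v) * e v else 0)"
    by (rule sum.mono_neutral_cong_left) auto
  finally show ?thesis .
qed

definition hsym :: "(complex \<times> nat) list \<Rightarrow> complex list \<Rightarrow> complex list list \<Rightarrow> (nat \<Rightarrow> complex)
    \<Rightarrow> (nat \<Rightarrow> nat \<Rightarrow> complex) \<Rightarrow> idx \<Rightarrow> idx \<Rightarrow> complex" where
  "hsym js cD cJ d e x y = (case (x, y) of (D a, D a') \<Rightarrow> if a = a' then cD ! a * d a else 0
     | (J b l, J b' t) \<Rightarrow> if b = b' then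
         (\<Sum>v<snd (js ! b). if l + t + v + 1 \<le> snd (js ! b) then cJ ! b ! (l + t + v) * e b v else 0)
         else 0
     | _ \<Rightarrow> 0)"

lemma hm_tm_mult:
  assumes x: "x \<in> Idx ks js"
  shows "(\<Sum>z\<in>Idx ks js. hm js cD cJ x z * tm d e z y) = hsym js cD cJ d e x y"
proof (cases x)
  case (D a)
  then show ?thesis unfolding block_diag_sum[OF block_diag_hm x]
    by (simp add: hm_def tm_def hsym_def split: idx.split)
next
  case (J b l)
  show ?thesis
  proof (cases y)
    case (D a)
    with J show ?thesis unfolding block_diag_sum[OF block_diag_hm x] by (simp add: tm_def hsym_def)
  next
    case (J b' t)
    have "(\<Sum>z\<in>Idx ks js. hm js cD cJ x z * tm d e z y) = (\<Sum>u<snd (js ! b).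
        (if l + u + 1 \<le> snd (js ! b) then cJ ! b ! (l + u) else 0) *
        (if b = b' \<and> t \<le> u then e b (u - t) else 0))"
      unfolding block_diag_sum[OF block_diag_hm x] using \<open>x = J b l\<close> J by (simp add: hm_def tm_def)
    also have "\<dots> = hsym js cD cJ d e x y"
      using hankel_toeplitz_block[where N="snd (js ! b)" and l=l and c="\<lambda>i. cJ ! b ! i" and t=t and e="e b"]
        \<open>x = J b l\<close> J
      by (cases "b = b'") (auto simp: hsym_def)
    finally show ?thesis .
  qed
qed

lemma hsym_symmetric: "hsym js cD cJ d e x y = hsym js cD cJ d e y x"
  by (auto simp: hsym_def add_ac split: idx.split cong: if_cong)

lemma Hmat_toeplitz_symmetric:
  assumes "T \<in> toeplitz ks js"
  shows "transpose_mat (Hmat ks js cD cJ * T) = Hmat ks js cD cJ * T"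
proof -
  obtain d e where T: "T = Tmat ks js d e" using assms by (auto simp: toeplitz_def)
  have "Hmat ks js cD cJ * T = imat ks js (hsym js cD cJ d e)"
    unfolding T Hmat_imat Tmat_def by (rule imat_mult) (rule hm_tm_mult)
  then show ?thesis using imat_symmetric hsym_symmetric by metis
qed


section \<open>Factorisation of r, c and M\<close>

text \<open>e has entry 1 at each diagonal position and at the first position of each Jordan block.
  Multiplying by e picks the first column of each block, so r = F e and c = H e.\<close>
definition eps :: "idx \<Rightarrow> complex" where
  "eps x = (case x of D a \<Rightarrow> 1 | J b l \<Rightarrow> if l = 0 then 1 else 0)"

lemma block_diag_mult_eps:
  assumes "block_diag \<phi>" "x \<in> Idx ks js"
  shows "(\<Sum>z\<in>Idx ks js. \<phi> x z * eps z) = (case x of D a \<Rightarrow> \<phi> x x | J b l \<Rightarrow> \<phi> x (J b 0))"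
proof -
  have first: "(\<Sum>u<n. f u * (if u = 0 then 1 else 0)) = f 0" if "0 < n" for n and f :: "nat \<Rightarrow> complex"
    using that by (simp add: if_distrib[of "(*) _"] sum.delta cong: if_cong)
  from assms(2) show ?thesis
    unfolding block_diag_sum[OF assms] by (auto simp: eps_def Idx_def first split: idx.split)
qed

lemma rvec_eq: "rvec ks js p q n m rho0 = Fmat ks js p q n m rho0 *\<^sub>v ivec ks js eps"
proof -
  have "Fmat ks js p q n m rho0 *\<^sub>v ivec ks js eps = ivec ks js (\<lambda>x. case x of
      D a \<Rightarrow> rho p q n m rho0 (ks ! a) | J b l \<Rightarrow> drho p q n m rho0 l (fst (js ! b)))"
    unfolding Fmat_Tmat Tmat_def
  proof (rule imat_mult_ivec)
    fix x assume "x \<in> Idx ks js"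
    then show "(\<Sum>z\<in>Idx ks js. tm (\<lambda>a. rho p q n m rho0 (ks ! a))
        (\<lambda>b k. drho p q n m rho0 k (fst (js ! b))) x z * eps z) = (case x of
        D a \<Rightarrow> rho p q n m rho0 (ks ! a) | J b l \<Rightarrow> drho p q n m rho0 l (fst (js ! b)))"
      by (simp add: block_diag_mult_eps[OF block_diag_tm]) (simp add: tm_def split: idx.split)
  qed
  then show ?thesis by (simp add: rvec_def ivec_def)
qed

lemma cvec_eq: "cvec ks js cD cJ = Hmat ks js cD cJ *\<^sub>v ivec ks js eps"
proof -
  have "Hmat ks js cD cJ *\<^sub>v ivec ks js eps = ivec ks js (\<lambda>x. case x of
      D a \<Rightarrow> cD ! a | J b l \<Rightarrow> cJ ! b ! l)"
    unfolding Hmat_imat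
  proof (rule imat_mult_ivec)
    fix x assume "x \<in> Idx ks js"
    then show "(\<Sum>z\<in>Idx ks js. hm js cD cJ x z * eps z) = (case x of
        D a \<Rightarrow> cD ! a | J b l \<Rightarrow> cJ ! b ! l)"
      by (simp add: block_diag_mult_eps[OF block_diag_hm]) (auto simp: hm_def Idx_def split: idx.split)
  qed
  then show ?thesis by (simp add: cvec_def ivec_def)
qed

lemmas mat_assoc_N = assoc_mult_mat[of _ N N _ N _ N] mult_carrier_mat[of _ N N _ N]
  assoc_mult_mat_vec[of _ N N _ N] mult_mat_vec_carrier[of _ N N]
  add_mult_distrib_mat[of _ N N _ _ N] mult_add_distrib_mat[of _ N N _ N] for N

lemma Mmat_factor:
  "Amat ks js aJ * Mmat ks js p q n m rho0 cD cJ
     = (Amat ks js aJ * Fmat ks js p q n m rho0) * Gmat ks js * Hmat ks js cD cJ"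
  by (simp add: Mmat_def Amat_Tmat Fmat_Tmat Tmat_def Gmat_def Hmat_def
      mat_assoc_N[where N="Ntot ks js"])

lemma Amat_rvec_factor:
  "Amat ks js aJ *\<^sub>v rvec ks js p q n m rho0 = (Amat ks js aJ * Fmat ks js p q n m rho0) *\<^sub>v ivec ks js eps"
  by (simp add: rvec_eq Amat_Tmat Fmat_Tmat Tmat_def mat_assoc_N[where N="Ntot ks js"])


section \<open>The symmetric resolvent argument for abstract matrices\<close>

lemma minv_right_inverse:
  fixes A :: "complex mat"
  assumes A: "A \<in> carrier_mat N N" and inv: "invertible_mat A"
  shows "minv A \<in> carrier_mat N N" "A * minv A = 1\<^sub>m N"
proof -
  obtain B where "inverts_mat A B" "inverts_mat B A" using inv by (auto simp: invertible_mat_def)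
  then have AB: "A * B = 1\<^sub>m N" and BA: "B * A = 1\<^sub>m (dim_row B)" using A by (auto simp: inverts_mat_def)
  have B: "B \<in> carrier_mat N N"
    using arg_cong[OF AB, of dim_col] arg_cong[OF BA, of dim_col] A by auto
  with A AB BA have "minv A = B" by (intro minv_unique) auto
  with B AB show "minv A \<in> carrier_mat N N" "A * minv A = 1\<^sub>m N" by simp_all
qed

lemma add_right_cancel_mat:
  fixes A B C :: "'a :: cancel_semigroup_add mat"
  assumes "A \<in> carrier_mat n k" "B \<in> carrier_mat n k" "C \<in> carrier_mat n k" "A + C = B + C"
  shows "A = B"
proof (rule eq_matI)
  fix i j assume ij: "i < dim_row B" "j < dim_col B"
  then have "(A + C) $$ (i, j) = (B + C) $$ (i, j)" using assms(4) by simp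
  then show "A $$ (i, j) = B $$ (i, j)" using assms(1-3) ij by simp
qed (use assms in auto)

text \<open>If P = H F and G are symmetric and (I + F G H) X = I, then Y = H X F is symmetric:
  Y + P G Y = P and its transpose Y^T + Y^T G P = P give Y^T G P = P G Y (multiply the first by
  Y^T G on the left, the second by G Y on the right), hence Y^T = P - P G Y = Y.\<close>
lemma resolvent_symmetric:
  fixes H F G X :: "complex mat"
  assumes c: "H \<in> carrier_mat N N" "F \<in> carrier_mat N N" "G \<in> carrier_mat N N" "X \<in> carrier_mat N N"
    and G: "transpose_mat G = G" and HF: "transpose_mat (H * F) = H * F"
    and X: "(1\<^sub>m N + F * G * H) * X = 1\<^sub>m N"
  shows "transpose_mat (H * X * F) = H * X * F"
proof -
  define P where "P = H * F"
  define Y where "Y = H * X * F"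
  define Q where "Q = transpose_mat Y"
  have cPYQ: "P \<in> carrier_mat N N" "Y \<in> carrier_mat N N" "Q \<in> carrier_mat N N"
    using c by (auto simp: P_def Y_def Q_def)
  have X': "X + F * (G * (H * X)) = 1\<^sub>m N" using X c by (simp add: mat_assoc_N[where N=N])
  have "Y + P * G * Y = H * ((X + F * (G * (H * X))) * F)"
    using c by (simp add: Y_def P_def mat_assoc_N[where N=N])
  then have Y_eq: "Y + P * G * Y = P" using c by (simp add: X' P_def)
  have Q_eq: "Q + Q * G * P = P"
  proof -
    have P: "transpose_mat P = P" using HF by (simp add: P_def)
    then have "transpose_mat (Y + P * G * Y) = Q + Q * G * P"
      using cPYQ c G by (simp add: Q_def transpose_add transpose_mult[of _ N N _ N])
    with Y_eq P show ?thesis by simp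
  qed
  have "P * G * Y = (Q + Q * G * P) * (G * Y)" using Q_eq c cPYQ by (simp add: mat_assoc_N[where N=N])
  also have "\<dots> = (Q * G) * (Y + P * G * Y)" using c cPYQ by (simp add: mat_assoc_N[where N=N])
  also have "\<dots> = Q * G * P" using Y_eq by simp
  finally have "Y + P * G * Y = Q + P * G * Y" using Y_eq Q_eq by simp
  moreover have "P * G * Y \<in> carrier_mat N N" using cPYQ c by simp
  ultimately have "Y = Q" using add_right_cancel_mat cPYQ by blast
  then show ?thesis by (simp add: Q_def Y_def)
qed

lemma sandwich_bilinear:
  fixes H F X A B :: "complex mat" and v :: "complex vec"
  assumes c: "H \<in> carrier_mat N N" "F \<in> carrier_mat N N" "X \<in> carrier_mat N N"
      "A \<in> carrier_mat N N" "B \<in> carrier_mat N N" and v: "v \<in> carrier_vec N"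
    and H: "transpose_mat H = H" and HA: "transpose_mat (H * A) = H * A" and BF: "B * F = F * B"
  shows "(H *\<^sub>v v) \<bullet> (A * X * B *\<^sub>v (F *\<^sub>v v)) = (A *\<^sub>v v) \<bullet> ((H * X * F) *\<^sub>v (B *\<^sub>v v))"
proof -
  have HA': "H * A = transpose_mat A * H"
    using HA transpose_mult[OF c(1) c(4)] H by simp
  have "(H *\<^sub>v v) \<bullet> (A * X * B *\<^sub>v (F *\<^sub>v v)) = (transpose_mat H *\<^sub>v v) \<bullet> (A * X * B *\<^sub>v (F *\<^sub>v v))"
    using H by simp
  also have "\<dots> = v \<bullet> (H *\<^sub>v (A * X * B *\<^sub>v (F *\<^sub>v v)))"
    by (rule transpose_vec_mult_scalar[OF c(1)]) (use c v in \<open>auto intro!: mult_mat_vec_carrier mult_carrier_mat\<close>)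
  also have "H *\<^sub>v (A * X * B *\<^sub>v (F *\<^sub>v v)) = (H * A) * X * (B * F) *\<^sub>v v"
    using c v by (simp add: mat_assoc_N[where N=N])
  also have "\<dots> = (transpose_mat A * H) * X * (F * B) *\<^sub>v v"
    by (simp only: HA' BF)
  also have "\<dots> = transpose_mat A * ((H * X * F) * B) *\<^sub>v v"
    using c v by (simp add: mat_assoc_N[where N=N])
  also have "\<dots> = transpose_mat A *\<^sub>v ((H * X * F) *\<^sub>v (B *\<^sub>v v))"
    using c v by (simp add: mat_assoc_N[where N=N])
  also have "v \<bullet> \<dots> = (transpose_mat (transpose_mat A) *\<^sub>v v) \<bullet> ((H * X * F) *\<^sub>v (B *\<^sub>v v))"
    by (rule transpose_vec_mult_scalar[symmetric, of _ N N]) (use c v in \<open>auto simp: mat_assoc_N[where N=N]\<close>)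
  finally show ?thesis by simp
qed

lemma symmetric_bilinear:
  fixes Y :: "complex mat" and u w :: "complex vec"
  assumes "Y \<in> carrier_mat N N" "u \<in> carrier_vec N" "w \<in> carrier_vec N" "transpose_mat Y = Y"
  shows "u \<bullet> (Y *\<^sub>v w) = w \<bullet> (Y *\<^sub>v u)"
proof -
  have "u \<bullet> (Y *\<^sub>v w) = (transpose_mat Y *\<^sub>v u) \<bullet> w"
    by (rule transpose_vec_mult_scalar[symmetric]) (use assms in auto)
  also have "\<dots> = w \<bullet> (Y *\<^sub>v u)"
    using assms by (simp add: comm_scalar_prod[of _ N])
  finally show ?thesis .
qed

lemma resolvent_form_symmetric:
  fixes H F G X P Q :: "complex mat" and v :: "complex vec"
  assumes c: "H \<in> carrier_mat N N" "F \<in> carrier_mat N N" "G \<in> carrier_mat N N" "X \<in> carrier_mat N N"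
      "P \<in> carrier_mat N N" "Q \<in> carrier_mat N N" and v: "v \<in> carrier_vec N"
    and sym: "transpose_mat H = H" "transpose_mat G = G" "transpose_mat (H * F) = H * F"
      "transpose_mat (H * P) = H * P" "transpose_mat (H * Q) = H * Q"
    and comm: "P * F = F * P" "Q * F = F * Q"
    and X: "(1\<^sub>m N + F * G * H) * X = 1\<^sub>m N"
  shows "(H *\<^sub>v v) \<bullet> (P * X * Q *\<^sub>v (F *\<^sub>v v)) = (H *\<^sub>v v) \<bullet> (Q * X * P *\<^sub>v (F *\<^sub>v v))"
proof -
  have Y: "transpose_mat (H * X * F) = H * X * F"
    using resolvent_symmetric[OF c(1-4) sym(2,3) X] .
  have "(H *\<^sub>v v) \<bullet> (P * X * Q *\<^sub>v (F *\<^sub>v v)) = (P *\<^sub>v v) \<bullet> ((H * X * F) *\<^sub>v (Q *\<^sub>v v))"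
    using sandwich_bilinear[OF c(1,2,4,5,6) v sym(1,4) comm(2)] .
  also have "\<dots> = (Q *\<^sub>v v) \<bullet> ((H * X * F) *\<^sub>v (P *\<^sub>v v))"
    using c v Y by (intro symmetric_bilinear[of _ N]) auto
  also have "\<dots> = (H *\<^sub>v v) \<bullet> (Q * X * P *\<^sub>v (F *\<^sub>v v))"
    using sandwich_bilinear[OF c(1,2,4,6,5) v sym(1,5) comm(1)] by simp
  finally show ?thesis .
qed


theorem theorem4:
  fixes ks :: "complex list" and js :: "(complex \<times> nat) list"
    and cD :: "complex list" and cJ :: "complex list list" and aJ :: "complex list list"
    and p q rho0 :: complex and n m :: int
  defines "N \<equiv> Ntot ks js"
    and "\<Gamma> \<equiv> Gam ks js"
    and "c \<equiv> cvec ks js cD cJ"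
    and "r' \<equiv> Amat ks js aJ *\<^sub>v rvec ks js p q n m rho0"
    and "M' \<equiv> Amat ks js aJ * Mmat ks js p q n m rho0 cD cJ"
  assumes eig_sum: "\<forall>x\<in>set ks \<union> fst ` set js. \<forall>y\<in>set ks \<union> fst ` set js. x + y \<noteq> 0"
    and pq: "\<forall>x\<in>set ks \<union> fst ` set js. p \<noteq> x \<and> p \<noteq> - x \<and> q \<noteq> x \<and> q \<noteq> - x"
    and len_cD: "length cD = length ks"
    and len_cJ: "length cJ = length js" "\<forall>b < length js. length (cJ ! b) = snd (js ! b)"
    and len_aJ: "length aJ = length js" "\<forall>b < length js. length (aJ ! b) = snd (js ! b)"
    and inv: "invertible_mat (1\<^sub>m N + M')"
  shows "\<forall>i j :: int.
           c \<bullet> (mpowi \<Gamma> j * minv (1\<^sub>m N + M') * mpowi \<Gamma> i *\<^sub>v r')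
         = c \<bullet> (mpowi \<Gamma> i * minv (1\<^sub>m N + M') * mpowi \<Gamma> j *\<^sub>v r')"
proof (intro allI)
  fix i j :: int
  have "\<forall>x\<in>set ks \<union> fst ` set js. x \<noteq> 0"
  proof
    fix x assume "x \<in> set ks \<union> fst ` set js"
    with eig_sum have "x + x \<noteq> 0" by blast
    then show "x \<noteq> 0" by auto
  qed
  then have powers: "mpowi \<Gamma> k \<in> toeplitz ks js" for k
    unfolding \<Gamma>_def by (rule mpowi_Gam_toeplitz)
  define F where "F = Amat ks js aJ * Fmat ks js p q n m rho0"
  define X where "X = minv (1\<^sub>m N + M')"
  have F: "F \<in> toeplitz ks js" by (auto simp: F_def toeplitz_def Amat_Tmat Fmat_Tmat Tmat_mult)
  have carrier: "F \<in> carrier_mat N N" "mpowi \<Gamma> k \<in> carrier_mat N N"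
    "Gmat ks js \<in> carrier_mat N N" "Hmat ks js cD cJ \<in> carrier_mat N N" "ivec ks js eps \<in> carrier_vec N" for k
    using toeplitz_carrier[OF F] toeplitz_carrier[OF powers] by (simp_all add: N_def Gmat_def Hmat_def)
  have X: "X \<in> carrier_mat N N" "(1\<^sub>m N + F * Gmat ks js * Hmat ks js cD cJ) * X = 1\<^sub>m N"
    using minv_right_inverse[OF _ inv] carrier by (simp_all add: X_def M'_def Mmat_factor flip: F_def)
  have data: "c = Hmat ks js cD cJ *\<^sub>v ivec ks js eps" "r' = F *\<^sub>v ivec ks js eps"
    by (simp_all add: c_def cvec_eq r'_def Amat_rvec_factor F_def)
  have "c \<bullet> (mpowi \<Gamma> j * X * mpowi \<Gamma> i *\<^sub>v r') = c \<bullet> (mpowi \<Gamma> i * X * mpowi \<Gamma> j *\<^sub>v r')"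
    unfolding data
    by (rule resolvent_form_symmetric[OF carrier(4,1,3) X(1) carrier(2,2,5) Hmat_symmetric
        Gmat_symmetric Hmat_toeplitz_symmetric[OF F] Hmat_toeplitz_symmetric[OF powers]
        Hmat_toeplitz_symmetric[OF powers] toeplitz_comm[OF powers F] toeplitz_comm[OF powers F] X(2)])
  then show "c \<bullet> (mpowi \<Gamma> j * minv (1\<^sub>m N + M') * mpowi \<Gamma> i *\<^sub>v r')
      = c \<bullet> (mpowi \<Gamma> i * minv (1\<^sub>m N + M') * mpowi \<Gamma> j *\<^sub>v r')"
    unfolding X_def .
qed

end
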